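(* Let $\mathbf{F}=(F_1,\ldots,F_d)$ be a vector of finite simple graphs, each with at most $n$ vertices. If $n \leq n' \leq n''$ are integers, then $P_{\mathbf{F};n'} \supseteq P_{\mathbf{F};n''}$.
   Context: For graphs $F,G$, $t^L(F,G)$ is the number of subgraphs of $G$ (not necessarily induced) isomorphic to $F$, and $t(F,G)=t^L(F,G)/t^L(F,K_{|G|})$ if $|F|\le|G|$ and $t(F,G)=0$ otherwise, where $|H|$ is the number of vertices of $H$ and $K_N$ the complete graph on $N$ vertices. Write $t(\mathbf{F},G)=(t(F_1,G),\ldots,t(F_d,G))\in\mathbb{R}^d$. The polytope from subgraph statistics is $P_{\mathbf{F};n}=\mathrm{conv}\{t(\mathbf{F},G)\mid G \text{ a graph on } n \text{ vertices}\}$. *)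

theory Defs
  imports "HOL-Analysis.Analysis"
begin

type_synonym graph = "nat set \<times> nat set set"

definition verts :: "graph \<Rightarrow> nat set" where "verts G = fst G"
definition edges :: "graph \<Rightarrow> nat set set" where "edges G = snd G"

definition simple_graph :: "graph \<Rightarrow> bool" where
  "simple_graph G \<longleftrightarrow> finite (verts G) \<and>
     (\<forall>e\<in>edges G. \<exists>u v. u \<noteq> v \<and> e = {u, v} \<and> u \<in> verts G \<and> v \<in> verts G)"

definition num_verts :: "graph \<Rightarrow> nat" where "num_verts G = card (verts G)"

definition graph_iso :: "graph \<Rightarrow> graph \<Rightarrow> bool" where
  "graph_iso G H \<longleftrightarrow> (\<exists>f. bij_betw f (verts G) (verts H) \<and>
     (\<forall>u\<in>verts G. \<forall>v\<in>verts G. {u, v} \<in> edges G \<longleftrightarrow> {f u, f v} \<in> edges H))"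

definition subgraphs :: "graph \<Rightarrow> graph set" where
  "subgraphs G = {H. simple_graph H \<and> verts H \<subseteq> verts G \<and> edges H \<subseteq> edges G}"

definition tL :: "graph \<Rightarrow> graph \<Rightarrow> nat" where
  "tL F G = card {H \<in> subgraphs G. graph_iso H F}"

definition complete_graph :: "nat \<Rightarrow> graph" where
  "complete_graph N = ({0..<N}, {{u, v} | u v. u < N \<and> v < N \<and> u \<noteq> v})"

definition tdens :: "graph \<Rightarrow> graph \<Rightarrow> real" where
  "tdens F G = (if num_verts F \<le> num_verts G
      then real (tL F G) / real (tL F (complete_graph (num_verts G))) else 0)"

definition tvec :: "('d::finite \<Rightarrow> graph) \<Rightarrow> graph \<Rightarrow> real ^ 'd" where
  "tvec F G = (\<chi> i. tdens (F i) G)"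

definition subgraph_polytope :: "('d::finite \<Rightarrow> graph) \<Rightarrow> nat \<Rightarrow> (real ^ 'd) set" where
  "subgraph_polytope F n = convex hull {tvec F G | G. simple_graph G \<and> num_verts G = n}"

end

theory Submission
  imports Defs
begin

(* If |F| \<le> m \<le> |G| = N, then t(F,G) is the average of t(F,G[S]) over the m-subsets S of V(G).
   Counting the pairs (copy H of F in G, m-set S \<supseteq> V(H)) gives
   \<Sum>_S t^L(F,G[S]) = t^L(F,G) \<cdot> C(N-|F|, m-|F|); the same count in K_N, all of whose induced
   subgraphs on m vertices are copies of K_m, shows that the normalisations agree.
   So t(F,G) is a convex combination of points t(F,G[S]) of P_{F;m}. *)

lemma graph_eq_verts_edges: "G = (verts G, edges G)"
  by (simp add: verts_def edges_def)

lemma edge_subset_verts: "simple_graph H \<Longrightarrow> e \<in> edges H \<Longrightarrow> e \<subseteq> verts H"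
  unfolding simple_graph_def by auto

lemma finite_subgraphs:
  assumes "simple_graph G"
  shows "finite (subgraphs G)"
proof -
  have fin_verts: "finite (verts G)"
    using assms simple_graph_def by auto
  then have "finite (edges G)"
    using edge_subset_verts[OF assms] finite_subset[of "edges G" "Pow (verts G)"] by auto
  moreover have "subgraphs G \<subseteq> Pow (verts G) \<times> Pow (edges G)"
    by (auto simp: subgraphs_def verts_def edges_def mem_Times_iff)
  ultimately show ?thesis
    using fin_verts finite_subset by blast
qed

lemma graph_iso_card_verts: "graph_iso H F \<Longrightarrow> card (verts H) = card (verts F)"
  unfolding graph_iso_def using bij_betw_same_card by blast

lemma graph_iso_sym:
  assumes "graph_iso G H"
  shows "graph_iso H G"
proof -
  obtain f where f: "bij_betw f (verts G) (verts H)"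
      "\<forall>u\<in>verts G. \<forall>v\<in>verts G. {u, v} \<in> edges G \<longleftrightarrow> {f u, f v} \<in> edges H"
    using assms graph_iso_def by blast
  let ?g = "inv_into (verts G) f"
  have g: "bij_betw ?g (verts H) (verts G)"
    using f(1) bij_betw_inv_into by blast
  show ?thesis
    unfolding graph_iso_def
  proof (intro exI[of _ ?g] conjI ballI)
    show "bij_betw ?g (verts H) (verts G)"
      using f(1) by (rule bij_betw_inv_into)
    fix u v assume uv: "u \<in> verts H" "v \<in> verts H"
    have "?g u \<in> verts G" "?g v \<in> verts G"
      using f(1) uv by (meson bij_betw_inv_into bij_betwE)+
    moreover have "f (?g u) = u" "f (?g v) = v"
      using f(1) uv by (meson bij_betw_inv_into_right)+
    ultimately show "{u, v} \<in> edges H \<longleftrightarrow> {?g u, ?g v} \<in> edges G"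
      using f(2) by metis
  qed
qed

lemma graph_iso_trans:
  assumes "graph_iso G H" "graph_iso H K"
  shows "graph_iso G K"
proof -
  obtain f where f: "bij_betw f (verts G) (verts H)"
      "\<forall>u\<in>verts G. \<forall>v\<in>verts G. {u, v} \<in> edges G \<longleftrightarrow> {f u, f v} \<in> edges H"
    using assms(1) graph_iso_def by blast
  obtain g where g: "bij_betw g (verts H) (verts K)"
      "\<forall>u\<in>verts H. \<forall>v\<in>verts H. {u, v} \<in> edges H \<longleftrightarrow> {g u, g v} \<in> edges K"
    using assms(2) graph_iso_def by blast
  show ?thesis
    unfolding graph_iso_def
  proof (intro exI[of _ "g \<circ> f"] conjI ballI)
    show "bij_betw (g \<circ> f) (verts G) (verts K)"
      using f(1) g(1) by (rule bij_betw_trans)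
    fix u v assume uv: "u \<in> verts G" "v \<in> verts G"
    then have "f u \<in> verts H" "f v \<in> verts H"
      using f(1) bij_betwE by blast+
    then show "{u, v} \<in> edges G \<longleftrightarrow> {(g \<circ> f) u, (g \<circ> f) v} \<in> edges K"
      using f(2) g(2) uv by simp
  qed
qed

definition graph_image :: "(nat \<Rightarrow> nat) \<Rightarrow> graph \<Rightarrow> graph" where
  "graph_image f H = (f ` verts H, image f ` edges H)"

lemma verts_graph_image [simp]: "verts (graph_image f H) = f ` verts H"
  and edges_graph_image [simp]: "edges (graph_image f H) = image f ` edges H"
  by (simp_all add: graph_image_def verts_def edges_def)

lemma simple_graph_image:
  assumes H: "simple_graph H" and inj: "inj_on f (verts H)"
  shows "simple_graph (graph_image f H)"
  unfolding simple_graph_def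
proof (intro conjI ballI)
  show "finite (verts (graph_image f H))"
    using H simple_graph_def by auto
  fix e' assume "e' \<in> edges (graph_image f H)"
  then obtain e where e: "e \<in> edges H" "e' = f ` e"
    by auto
  obtain u v where uv: "u \<noteq> v" "e = {u, v}" "u \<in> verts H" "v \<in> verts H"
    using H e(1) unfolding simple_graph_def by blast
  then have "f u \<noteq> f v"
    using inj by (auto dest: inj_onD)
  with e uv show "\<exists>u v. u \<noteq> v \<and> e' = {u, v} \<and>
      u \<in> verts (graph_image f H) \<and> v \<in> verts (graph_image f H)"
    by (intro exI[of _ "f u"] exI[of _ "f v"]) auto
qed

lemma graph_iso_graph_image:
  assumes H: "simple_graph H" and inj: "inj_on f (verts H)"
  shows "graph_iso H (graph_image f H)"
  unfolding graph_iso_def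
proof (intro exI conjI ballI)
  show "bij_betw f (verts H) (verts (graph_image f H))"
    using inj by (simp add: inj_on_imp_bij_betw)
  fix u v assume uv: "u \<in> verts H" "v \<in> verts H"
  show "{u, v} \<in> edges H \<longleftrightarrow> {f u, f v} \<in> edges (graph_image f H)"
  proof
    assume "{u, v} \<in> edges H"
    then have "f ` {u, v} \<in> image f ` edges H"
      by blast
    then show "{f u, f v} \<in> edges (graph_image f H)"
      by simp
  next
    assume "{f u, f v} \<in> edges (graph_image f H)"
    then obtain e where e: "e \<in> edges H" "f ` {u, v} = f ` e"
      by auto
    have "{u, v} = e"
      using e(2) uv inj_on_image_eq_iff[OF inj _ edge_subset_verts[OF H e(1)], of "{u, v}"]
      by simp
    with e show "{u, v} \<in> edges H"
      by simp
  qed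
qed

lemma graph_image_in_subgraphs:
  assumes f: "bij_betw f (verts G1) (verts G2)"
    "\<forall>u\<in>verts G1. \<forall>v\<in>verts G1. {u, v} \<in> edges G1 \<longleftrightarrow> {f u, f v} \<in> edges G2"
    and H: "H \<in> subgraphs G1"
  shows "graph_image f H \<in> subgraphs G2"
proof -
  have simple: "simple_graph H" and sub: "verts H \<subseteq> verts G1" "edges H \<subseteq> edges G1"
    using H by (auto simp: subgraphs_def)
  have "simple_graph (graph_image f H)"
    using simple_graph_image[OF simple inj_on_subset[OF bij_betw_imp_inj_on[OF f(1)] sub(1)]] .
  moreover have "verts (graph_image f H) \<subseteq> verts G2"
    using image_mono[OF sub(1), of f] bij_betw_imp_surj_on[OF f(1)] by simp
  moreover have "edges (graph_image f H) \<subseteq> edges G2"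
  proof
    fix e' assume "e' \<in> edges (graph_image f H)"
    then obtain e where e: "e \<in> edges H" "e' = f ` e"
      by auto
    obtain u v where uv: "e = {u, v}" "u \<in> verts H" "v \<in> verts H"
      using simple e(1) unfolding simple_graph_def by blast
    moreover have "{u, v} \<in> edges G1"
      using e(1) sub(2) uv(1) by blast
    ultimately have "{f u, f v} \<in> edges G2"
      using f(2) sub(1) by blast
    then show "e' \<in> edges G2"
      using e(2) uv(1) by simp
  qed
  ultimately show ?thesis
    by (simp add: subgraphs_def)
qed

lemma inj_on_graph_image:
  assumes "inj_on f (verts G)"
  shows "inj_on (graph_image f) (subgraphs G)"
proof
  fix H1 H2 assume H: "H1 \<in> subgraphs G" "H2 \<in> subgraphs G" "graph_image f H1 = graph_image f H2"
  have sub: "verts H1 \<subseteq> verts G" "verts H2 \<subseteq> verts G"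
    and edge_sub: "edges H1 \<subseteq> Pow (verts G)" "edges H2 \<subseteq> Pow (verts G)"
    using H(1,2) edge_subset_verts unfolding subgraphs_def by blast+
  have "f ` verts H1 = f ` verts H2" "image f ` edges H1 = image f ` edges H2"
    using arg_cong[OF H(3), of verts] arg_cong[OF H(3), of edges] by simp_all
  then have "verts H1 = verts H2" "edges H1 = edges H2"
    using inj_on_image_eq_iff[OF assms sub] inj_on_image_eq_iff[OF inj_on_image_Pow[OF assms] edge_sub]
    by simp_all
  then show "H1 = H2"
    using graph_eq_verts_edges by metis
qed

lemma tL_le_if_graph_iso:
  assumes iso: "graph_iso G1 G2" and "simple_graph G2"
  shows "tL F G1 \<le> tL F G2"
proof -
  obtain f where f: "bij_betw f (verts G1) (verts G2)"
      "\<forall>u\<in>verts G1. \<forall>v\<in>verts G1. {u, v} \<in> edges G1 \<longleftrightarrow> {f u, f v} \<in> edges G2"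
    using iso graph_iso_def by blast
  let ?A = "{H \<in> subgraphs G1. graph_iso H F}"
  let ?B = "{H \<in> subgraphs G2. graph_iso H F}"
  have "inj_on (graph_image f) ?A"
    by (rule inj_on_subset[OF inj_on_graph_image[OF bij_betw_imp_inj_on[OF f(1)]]]) blast
  moreover have "graph_image f ` ?A \<subseteq> ?B"
  proof (rule image_subsetI)
    fix H assume "H \<in> ?A"
    then have H: "H \<in> subgraphs G1" "graph_iso H F"
      by simp_all
    have "inj_on f (verts H)"
      using H(1) bij_betw_imp_inj_on[OF f(1)] unfolding subgraphs_def by (auto intro: inj_on_subset)
    then have "graph_iso (graph_image f H) H"
      using H(1) graph_iso_graph_image graph_iso_sym unfolding subgraphs_def by blast
    then show "graph_image f H \<in> ?B"
      using graph_image_in_subgraphs[OF f H(1)] H(2) graph_iso_trans by blast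
  qed
  moreover have "finite ?B"
    using finite_subgraphs[OF assms(2)] by auto
  ultimately show ?thesis
    unfolding tL_def using card_inj_on_le by blast
qed

lemma tL_eq_if_graph_iso:
  "graph_iso G1 G2 \<Longrightarrow> simple_graph G1 \<Longrightarrow> simple_graph G2 \<Longrightarrow> tL F G1 = tL F G2"
  using tL_le_if_graph_iso graph_iso_sym le_antisym by metis

definition induced_subgraph :: "graph \<Rightarrow> nat set \<Rightarrow> graph" where
  "induced_subgraph G S = (S, {e \<in> edges G. e \<subseteq> S})"

lemma verts_induced_subgraph [simp]: "verts (induced_subgraph G S) = S"
  and edges_induced_subgraph [simp]: "edges (induced_subgraph G S) = {e \<in> edges G. e \<subseteq> S}"
  by (simp_all add: induced_subgraph_def verts_def edges_def)

lemma simple_graph_induced_subgraph: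
  assumes G: "simple_graph G" and S: "S \<subseteq> verts G"
  shows "simple_graph (induced_subgraph G S)"
  unfolding simple_graph_def
proof (intro conjI ballI)
  show "finite (verts (induced_subgraph G S))"
    using G S finite_subset unfolding simple_graph_def by auto
  fix e assume "e \<in> edges (induced_subgraph G S)"
  then have e: "e \<in> edges G" "e \<subseteq> S"
    by simp_all
  then obtain u v where "u \<noteq> v" "e = {u, v}"
    using G unfolding simple_graph_def by blast
  with e show "\<exists>u v. u \<noteq> v \<and> e = {u, v} \<and>
      u \<in> verts (induced_subgraph G S) \<and> v \<in> verts (induced_subgraph G S)"
    by auto
qed

lemma subgraphs_induced_subgraph:
  assumes "S \<subseteq> verts G"
  shows "subgraphs (induced_subgraph G S) = {H \<in> subgraphs G. verts H \<subseteq> S}"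
proof -
  have "edges H \<subseteq> {e \<in> edges G. e \<subseteq> S}"
    if "simple_graph H" "edges H \<subseteq> edges G" "verts H \<subseteq> S" for H
    using edge_subset_verts[OF that(1)] that(2,3) by blast
  then show ?thesis
    using assms unfolding subgraphs_def by auto
qed

lemma card_supersets_of_card:
  assumes V: "finite V" and T: "T \<subseteq> V" "card T \<le> m"
  shows "card {S. S \<subseteq> V \<and> card S = m \<and> T \<subseteq> S} = (card V - card T) choose (m - card T)"
proof -
  have fin_T: "finite T"
    using V T(1) finite_subset by blast
  have "bij_betw (\<lambda>S. S - T) {S. S \<subseteq> V \<and> card S = m \<and> T \<subseteq> S}
      {B. B \<subseteq> V - T \<and> card B = m - card T}"
  proof (rule bij_betw_byWitness[where f' = "\<lambda>B. B \<union> T"])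
    show "\<forall>S\<in>{S. S \<subseteq> V \<and> card S = m \<and> T \<subseteq> S}. S - T \<union> T = S"
      by auto
    show "\<forall>B\<in>{B. B \<subseteq> V - T \<and> card B = m - card T}. B \<union> T - T = B"
      by auto
    show "(\<lambda>S. S - T) ` {S. S \<subseteq> V \<and> card S = m \<and> T \<subseteq> S}
        \<subseteq> {B. B \<subseteq> V - T \<and> card B = m - card T}"
    proof clarify
      fix S assume S: "S \<subseteq> V" "T \<subseteq> S" "m = card S"
      then have "finite S"
        using V finite_subset by blast
      then show "S - T \<subseteq> V - T \<and> card (S - T) = card S - card T"
        using S fin_T card_Diff_subset by auto
    qed
    show "(\<lambda>B. B \<union> T) ` {B. B \<subseteq> V - T \<and> card B = m - card T}
        \<subseteq> {S. S \<subseteq> V \<and> card S = m \<and> T \<subseteq> S}"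
    proof clarify
      fix B assume B: "B \<subseteq> V - T" "card B = m - card T"
      have "finite B" "B \<inter> T = {}"
        using B V finite_subset by blast+
      then have "card (B \<union> T) = card B + card T"
        using fin_T card_Un_disjoint by blast
      then show "B \<union> T \<subseteq> V \<and> card (B \<union> T) = m \<and> T \<subseteq> B \<union> T"
        using B T by auto
    qed
  qed
  then have "card {S. S \<subseteq> V \<and> card S = m \<and> T \<subseteq> S} = card {B. B \<subseteq> V - T \<and> card B = m - card T}"
    by (rule bij_betw_same_card)
  also have "\<dots> = card (V - T) choose (m - card T)"
    using V by (simp add: n_subsets)
  finally show ?thesis
    using T(1) fin_T by (simp add: card_Diff_subset)
qed

lemma sum_tL_induced_subgraphs:
  assumes G: "simple_graph G" and k: "card (verts F) \<le> m"
  shows "(\<Sum>S\<in>{S. S \<subseteq> verts G \<and> card S = m}. tL F (induced_subgraph G S))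
     = tL F G * ((card (verts G) - card (verts F)) choose (m - card (verts F)))"
proof -
  let ?V = "verts G" and ?k = "card (verts F)"
  let ?Ss = "{S. S \<subseteq> ?V \<and> card S = m}"
  let ?A = "{H \<in> subgraphs G. graph_iso H F}"
  have fin_V: "finite ?V"
    using G simple_graph_def by auto
  have fin_Ss: "finite ?Ss"
    using fin_V by (auto intro: finite_subset[of _ "Pow ?V"])
  have fin_A: "finite ?A"
    using finite_subgraphs[OF G] by auto
  have "(\<Sum>S\<in>?Ss. tL F (induced_subgraph G S)) = (\<Sum>S\<in>?Ss. card {H \<in> ?A. verts H \<subseteq> S})"
  proof (intro sum.cong refl)
    fix S assume "S \<in> ?Ss"
    then have "subgraphs (induced_subgraph G S) = {H \<in> subgraphs G. verts H \<subseteq> S}"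
      by (simp add: subgraphs_induced_subgraph)
    then show "tL F (induced_subgraph G S) = card {H \<in> ?A. verts H \<subseteq> S}"
      unfolding tL_def by (metis (no_types, lifting) Collect_cong mem_Collect_eq)
  qed
  also have "\<dots> = (\<Sum>S\<in>?Ss. \<Sum>H\<in>?A. if verts H \<subseteq> S then 1 else 0)"
    using fin_A by (simp add: sum.If_cases Int_def conj_assoc)
  also have "\<dots> = (\<Sum>H\<in>?A. \<Sum>S\<in>?Ss. if verts H \<subseteq> S then 1 else 0)"
    by (rule sum.swap)
  also have "\<dots> = (\<Sum>H\<in>?A. card {S. S \<subseteq> ?V \<and> card S = m \<and> verts H \<subseteq> S})"
    using fin_Ss by (simp add: sum.If_cases Int_def conj_assoc)
  also have "\<dots> = (\<Sum>H\<in>?A. (card ?V - ?k) choose (m - ?k))"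
  proof (intro sum.cong refl)
    fix H assume "H \<in> ?A"
    then have "verts H \<subseteq> ?V" "card (verts H) = ?k"
      using graph_iso_card_verts by (auto simp: subgraphs_def)
    then show "card {S. S \<subseteq> ?V \<and> card S = m \<and> verts H \<subseteq> S} = (card ?V - ?k) choose (m - ?k)"
      using card_supersets_of_card[OF fin_V, of "verts H" m] k by simp
  qed
  also have "\<dots> = tL F G * ((card ?V - ?k) choose (m - ?k))"
    by (simp add: tL_def)
  finally show ?thesis .
qed

lemma verts_complete_graph [simp]: "verts (complete_graph N) = {0..<N}"
  by (simp add: complete_graph_def verts_def)

lemma doubleton_in_edges_complete_graph:
  "{u, v} \<in> edges (complete_graph N) \<longleftrightarrow> u \<noteq> v \<and> u < N \<and> v < N"
  unfolding complete_graph_def edges_def by (auto simp: doubleton_eq_iff)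

lemma simple_graph_complete_graph: "simple_graph (complete_graph N)"
  unfolding simple_graph_def complete_graph_def verts_def edges_def by auto

lemma graph_iso_induced_subgraph_complete_graph:
  assumes S: "S \<subseteq> {0..<N}"
  shows "graph_iso (induced_subgraph (complete_graph N) S) (complete_graph (card S))"
proof -
  obtain h where h: "bij_betw h S {0..<card S}"
    using finite_same_card_bij[of S "{0..<card S}"] S finite_subset by auto
  show ?thesis
    unfolding graph_iso_def
  proof (intro exI[of _ h] conjI ballI)
    show "bij_betw h (verts (induced_subgraph (complete_graph N) S)) (verts (complete_graph (card S)))"
      using h by simp
    fix u v assume "u \<in> verts (induced_subgraph (complete_graph N) S)"
      "v \<in> verts (induced_subgraph (complete_graph N) S)"
    then have uv: "u \<in> S" "v \<in> S"
      by simp_all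
    then have "h u < card S" "h v < card S" "u \<noteq> v \<longleftrightarrow> h u \<noteq> h v"
      using h by (auto simp: bij_betw_def inj_on_eq_iff)
    moreover have "u < N" "v < N"
      using uv S by auto
    ultimately show "{u, v} \<in> edges (induced_subgraph (complete_graph N) S) \<longleftrightarrow>
        {h u, h v} \<in> edges (complete_graph (card S))"
      using uv by (simp add: doubleton_in_edges_complete_graph)
  qed
qed

lemma tdens_eq_average_induced_subgraphs:
  assumes G: "simple_graph G" "num_verts G = N"
    and k: "num_verts F \<le> m" "m \<le> N"
  shows "tdens F G =
    (\<Sum>S\<in>{S. S \<subseteq> verts G \<and> card S = m}. tdens F (induced_subgraph G S)) / real (N choose m)"
proof -
  define k where "k = num_verts F"
  define c where "c = real ((N - k) choose (m - k))"
  define t_m where "t_m = real (tL F (complete_graph m))"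
  let ?Ss = "{S. S \<subseteq> verts G \<and> card S = m}"
  let ?Sk = "{S. S \<subseteq> {0..<N} \<and> card S = m}"
  have "c \<noteq> 0"
    using k unfolding c_def k_def by simp
  have count_G: "(\<Sum>S\<in>?Ss. real (tL F (induced_subgraph G S))) = real (tL F G) * c"
    using sum_tL_induced_subgraphs[OF G(1), of F m] G(2) k
    unfolding c_def k_def num_verts_def by (simp flip: of_nat_sum of_nat_mult)
  have "real (N choose m) * t_m = (\<Sum>S\<in>?Sk. real (tL F (induced_subgraph (complete_graph N) S)))"
  proof -
    have "tL F (induced_subgraph (complete_graph N) S) = tL F (complete_graph m)" if "S \<in> ?Sk" for S
      using that tL_eq_if_graph_iso[OF graph_iso_induced_subgraph_complete_graph]
        simple_graph_induced_subgraph simple_graph_complete_graph by auto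
    then show ?thesis
      using n_subsets[of "{0..<N}" m] unfolding t_m_def by simp
  qed
  also have "\<dots> = real (tL F (complete_graph N)) * c"
    using sum_tL_induced_subgraphs[OF simple_graph_complete_graph, of F m N] k
    unfolding c_def k_def num_verts_def by (simp flip: of_nat_sum of_nat_mult)
  finally have count_K: "real (N choose m) * t_m = real (tL F (complete_graph N)) * c" .
  have "tdens F (induced_subgraph G S) = real (tL F (induced_subgraph G S)) / t_m" if "S \<in> ?Ss" for S
    using that k unfolding tdens_def t_m_def num_verts_def by simp
  then have "(\<Sum>S\<in>?Ss. tdens F (induced_subgraph G S)) / real (N choose m)
      = real (tL F G) * c / (real (N choose m) * t_m)"
    using count_G by (simp add: sum_divide_distrib[symmetric])
  also have "\<dots> = real (tL F G) / real (tL F (complete_graph N))"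
    using count_K \<open>c \<noteq> 0\<close> by simp
  also have "\<dots> = tdens F G"
    using G k unfolding tdens_def by simp
  finally show ?thesis ..
qed

lemma tvec_in_subgraph_polytope:
  assumes G: "simple_graph G" and F: "\<forall>i. num_verts (F i) \<le> m" and m: "m \<le> num_verts G"
  shows "tvec F G \<in> subgraph_polytope F m"
proof -
  let ?Ss = "{S. S \<subseteq> verts G \<and> card S = m}"
  let ?w = "1 / real (num_verts G choose m)"
  have fin_V: "finite (verts G)"
    using G simple_graph_def by auto
  have fin_Ss: "finite ?Ss"
    using fin_V by (auto intro: finite_subset[of _ "Pow (verts G)"])
  have weights: "(\<Sum>S\<in>?Ss. ?w) = 1"
    using n_subsets[OF fin_V, of m] m by (simp add: num_verts_def)
  have members: "tvec F (induced_subgraph G S) \<in> subgraph_polytope F m" if "S \<in> ?Ss" for S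
  proof -
    have "simple_graph (induced_subgraph G S)" "num_verts (induced_subgraph G S) = m"
      using that simple_graph_induced_subgraph[OF G] by (auto simp: num_verts_def)
    then show ?thesis
      unfolding subgraph_polytope_def by (intro hull_inc) blast
  qed
  have "(\<Sum>S\<in>?Ss. ?w *\<^sub>R tvec F (induced_subgraph G S)) \<in> subgraph_polytope F m"
    using convex_sum[OF fin_Ss _ weights _ members] unfolding subgraph_polytope_def
    by (simp add: convex_convex_hull)
  moreover have "tvec F G = (\<Sum>S\<in>?Ss. ?w *\<^sub>R tvec F (induced_subgraph G S))"
    using tdens_eq_average_induced_subgraphs[OF G refl F[rule_format] m]
    by (simp add: vec_eq_iff tvec_def sum_divide_distrib)
  ultimately show ?thesis
    by simp
qed

theorem proposition2p7:
  fixes F :: "'d::finite \<Rightarrow> graph" and n n' n'' :: nat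
  assumes "\<forall>i. simple_graph (F i)"
    and "\<forall>i. num_verts (F i) \<le> n"
    and "n \<le> n'" and "n' \<le> n''"
  shows "subgraph_polytope F n'' \<subseteq> subgraph_polytope F n'"
proof -
  have "\<forall>i. num_verts (F i) \<le> n'"
    using assms(2,3) le_trans by blast
  then have "{tvec F G |G. simple_graph G \<and> num_verts G = n''} \<subseteq> subgraph_polytope F n'"
    using tvec_in_subgraph_polytope assms(4) by blast
  then show ?thesis
    unfolding subgraph_polytope_def[of F n'']
    by (rule hull_minimal) (simp add: subgraph_polytope_def convex_convex_hull)
qed

end
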